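(* Let $\alpha,\beta\ge1$. For every $p\in\mathcal{P}_{\alpha,\beta}$, the total degree of $\pi(p)\in k[\mathbf{x}]$ equals $\deg(f_{[n]})\,\alpha+\beta$, and in particular is at least $3$.
   Context: Let $k$ be a field of characteristic zero, $n\ge3$, $k[\mathbf{x}]=k[x_1,\ldots,x_n]$, $k[t,\mathbf{x}]=k[t,x_1,\ldots,x_n]$. $D=\sum_{j=1}^{n-1}(n-j)\,x_{j+1}\,\partial/\partial x_j$. $f_{[2m-1]}=\frac12\sum_{i=1}^{2m-1}(-1)^{i-1}\binom{2m-2}{i-1}x_ix_{2m-i}$ for $n=2m-1$, $m\ge2$; $f_{[2m]}=D(f_{[2m-1]})^2-2D^2(f_{[2m-1]})f_{[2m-1]}$ for $n=2m$, $m\ge2$ (a nonzero homogeneous polynomial of degree $2$ resp. $4$). $\pi:k[t,\mathbf{x}]\to k[\mathbf{x}]$ is the $k[\mathbf{x}]$-algebra map with $t\mapsto f_{[n]}$. For nonzero $p$, $\mathrm{supp}(p)$ is the set of exponent vectors $(i_0,\ldots,i_n)$ of monomials $t^{i_0}x_1^{i_1}\cdots x_n^{i_n}$ with nonzero coefficient, $\deg_{\mathbf w}(p)=\max\{\sum_j i_jw_j:(i_0,\ldots,i_n)\in\mathrm{supp}(p)\}$, and $\mathrm{lt}(p)$ is the leading term for the lexicographic order with $t>x_1>\cdots>x_n$. With $\mathbf{w}_1=(1,\ldots,1)$ and $\mathbf{w}_2$ the weight with $n-2$ on $t$ and $2n-j-1$ on $x_j$, $\mathcal{P}_{\alpha,\beta}$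 is the set of nonzero $p\in k[t,\mathbf{x}]$ with $\deg_{\mathbf{w}_1}(p)\le\alpha+\beta$, $\deg_{\mathbf{w}_2}(p)\le(n-2)\alpha+(n-1)\beta$ and $\mathrm{lt}(p)\in k^*t^\alpha x_n^\beta$. *)

theory Defs
  imports Main "HOL-Library.Poly_Mapping"
begin

text \<open>Multivariate polynomials over a field as finitely supported maps from
monomials (exponent vectors) to coefficients.
Variable index 0 is t, variable index j (1 \<le> j \<le> n) is x_j.\<close>

type_synonym 'a mpoly = "(nat \<Rightarrow>\<^sub>0 nat) \<Rightarrow>\<^sub>0 'a"

definition mconst :: "'a::comm_ring_1 \<Rightarrow> 'a mpoly" where
  "mconst c = Poly_Mapping.single 0 c"

definition mvar :: "nat \<Rightarrow> 'a::comm_ring_1 mpoly" where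
  "mvar i = Poly_Mapping.single (Poly_Mapping.single i 1) 1"

definition vars_in :: "nat set \<Rightarrow> 'a::comm_ring_1 mpoly \<Rightarrow> bool" where
  "vars_in V p \<longleftrightarrow> (\<forall>m\<in>Poly_Mapping.keys p. Poly_Mapping.keys m \<subseteq> V)"

definition pdiff :: "nat \<Rightarrow> 'a::comm_ring_1 mpoly \<Rightarrow> 'a mpoly" where
  "pdiff i p = (\<Sum>m\<in>Poly_Mapping.keys p. Poly_Mapping.single (m - Poly_Mapping.single i 1)
                                (of_nat (Poly_Mapping.lookup m i) * Poly_Mapping.lookup p m))"

definition Dder :: "nat \<Rightarrow> 'a::comm_ring_1 mpoly \<Rightarrow> 'a mpoly" where
  "Dder n p = (\<Sum>j=1..n-1. mconst (of_nat (n - j)) * mvar (j+1) * pdiff j p)"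

definition f_odd :: "nat \<Rightarrow> 'a::field_char_0 mpoly" where
  "f_odd N = mconst (1/2) *
     (\<Sum>i=1..N. mconst ((-1)^(i-1) * of_nat ((N-1) choose (i-1))) * mvar i * mvar (N + 1 - i))"

definition fpoly :: "nat \<Rightarrow> 'a::field_char_0 mpoly" where
  "fpoly n = (if odd n then f_odd n
              else Dder n (f_odd (n-1)) ^ 2 - 2 * Dder n (Dder n (f_odd (n-1))) * f_odd (n-1))"

text \<open>pi: k[x]-algebra map k[t,x] \<rightarrow> k[x] with t \<mapsto> q (t is variable 0)\<close>
definition subst_t :: "'a::comm_ring_1 mpoly \<Rightarrow> 'a mpoly \<Rightarrow> 'a mpoly" where
  "subst_t q p = (\<Sum>m\<in>Poly_Mapping.keys p. mconst (Poly_Mapping.lookup p m) * q ^ (Poly_Mapping.lookup m 0) *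
                     Poly_Mapping.single (m - Poly_Mapping.single 0 (Poly_Mapping.lookup m 0)) 1)"

text \<open>weighted degree (for nonzero p): max over the support of sum_j i_j w_j\<close>
definition wdeg :: "(nat \<Rightarrow> nat) \<Rightarrow> 'a::comm_ring_1 mpoly \<Rightarrow> nat" where
  "wdeg w p = Max ((\<lambda>m. \<Sum>j\<in>Poly_Mapping.keys m. Poly_Mapping.lookup m j * w j) ` Poly_Mapping.keys p)"

definition tdeg :: "'a::comm_ring_1 mpoly \<Rightarrow> nat" where
  "tdeg p = wdeg (\<lambda>_. 1) p"

definition lex_less :: "(nat \<Rightarrow>\<^sub>0 nat) \<Rightarrow> (nat \<Rightarrow>\<^sub>0 nat) \<Rightarrow> bool" where
  "lex_less m1 m2 \<longleftrightarrow> (\<exists>i. (\<forall>j<i. Poly_Mapping.lookup m1 j = Poly_Mapping.lookup m2 j) \<and> Poly_Mapping.lookup m1 i < Poly_Mapping.lookup m2 i)"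

definition lead_mon :: "'a::comm_ring_1 mpoly \<Rightarrow> (nat \<Rightarrow>\<^sub>0 nat)" where
  "lead_mon p = (THE m. m \<in> Poly_Mapping.keys p \<and> (\<forall>m'\<in>Poly_Mapping.keys p. m' \<noteq> m \<longrightarrow> lex_less m' m))"

definition w2 :: "nat \<Rightarrow> nat \<Rightarrow> nat" where
  "w2 n j = (if j = 0 then n - 2 else 2*n - j - 1)"

definition Pset :: "nat \<Rightarrow> nat \<Rightarrow> nat \<Rightarrow> 'a::field_char_0 mpoly set" where
  "Pset n \<alpha> \<beta> = {p. vars_in {0..n} p \<and> p \<noteq> 0 \<and>
      tdeg p \<le> \<alpha> + \<beta> \<and>
      wdeg (w2 n) p \<le> (n-2)*\<alpha> + (n-1)*\<beta> \<and>
      lead_mon p = Poly_Mapping.single 0 \<alpha> + Poly_Mapping.single n \<beta>}"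

end

theory Submission
  imports Defs "HOL-Computational_Algebra.Polynomial"
begin

text \<open>Write \<open>\<pi>(p) = \<Sum>\<^sub>m c\<^sub>m f^m\<^sub>0 x^m'\<close> with \<open>m'\<close> the \<open>x\<close>-part of the monomial \<open>m\<close>.
Since \<open>f = f\<^sub>[\<^sub>n\<^sub>]\<close> is nonzero and homogeneous of degree \<open>d \<in> {2,4}\<close>, the summand of \<open>m\<close> has
total degree \<open>d m\<^sub>0 + |m'|\<close>.  For the lex-leading monomial \<open>t\<^sup>\<alpha>x\<^sub>n\<^sup>\<beta>\<close> this is \<open>d\<alpha> + \<beta>\<close>, and
every other monomial of \<open>p\<close> gives strictly less: either \<open>m\<^sub>0 < \<alpha>\<close>, and then \<open>d \<ge> 2\<close> with
\<open>|m| \<le> \<alpha> + \<beta>\<close> suffices, or \<open>m\<^sub>0 = \<alpha>\<close>, and then the \<open>w\<^sub>2\<close>-bound forces \<open>|m| < \<alpha> + \<beta>\<close>,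
because it says that \<open>\<Sum>\<^sub>j (n - j) m\<^sub>j = 0\<close> as soon as \<open>|m| = \<alpha> + \<beta>\<close>, i.e. \<open>m = t\<^sup>\<alpha>x\<^sub>n\<^sup>\<beta>\<close>.
Total degrees are read off as ordinary degrees after grading \<open>k[x]\<close> by an extra
variable \<open>s\<close>, which makes them additive under multiplication.\<close>

definition mpoly_extend ::
    "((nat \<Rightarrow>\<^sub>0 nat) \<Rightarrow> 'a \<Rightarrow> 'b) \<Rightarrow> 'a::comm_ring_1 mpoly \<Rightarrow> 'b::comm_ring_1" where
  "mpoly_extend f p = (\<Sum>m\<in>Poly_Mapping.keys p. f m (Poly_Mapping.lookup p m))"

lemma mpoly_sum_singles:
  "p = (\<Sum>m\<in>Poly_Mapping.keys p. Poly_Mapping.single m (Poly_Mapping.lookup p m))"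
proof (rule poly_mapping_eqI)
  fix k
  have "(\<Sum>m\<in>Poly_Mapping.keys p. Poly_Mapping.lookup (Poly_Mapping.single m (Poly_Mapping.lookup p m)) k)
      = (\<Sum>m\<in>Poly_Mapping.keys p. if m = k then Poly_Mapping.lookup p k else 0)"
    by (rule sum.cong) (auto simp: lookup_single when_def)
  also have "\<dots> = Poly_Mapping.lookup p k"
    by (auto simp: in_keys_iff)
  finally show "Poly_Mapping.lookup p k
      = Poly_Mapping.lookup (\<Sum>m\<in>Poly_Mapping.keys p. Poly_Mapping.single m (Poly_Mapping.lookup p m)) k"
    by (simp add: lookup_sum)
qed

locale mpoly_extend_additive =
  fixes f :: "(nat \<Rightarrow>\<^sub>0 nat) \<Rightarrow> 'a::comm_ring_1 \<Rightarrow> 'b::comm_ring_1"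
  assumes zero: "f m 0 = 0" and add: "f m (a + b) = f m a + f m b"
begin

lemma extend_add: "mpoly_extend f (p + q) = mpoly_extend f p + mpoly_extend f q"
  unfolding mpoly_extend_def by (rule setsum_keys_plus_distrib) (auto simp: zero add)

lemma extend_zero [simp]: "mpoly_extend f 0 = 0"
  by (simp add: mpoly_extend_def)

lemma extend_single [simp]: "mpoly_extend f (Poly_Mapping.single m c) = f m c"
  by (cases "c = 0") (auto simp: mpoly_extend_def zero)

lemma extend_sum: "mpoly_extend f (sum g S) = (\<Sum>i\<in>S. mpoly_extend f (g i))"
  by (induction S rule: infinite_finite_induct) (auto simp: extend_add)

lemma extend_diff: "mpoly_extend f (p - q) = mpoly_extend f p - mpoly_extend f q"
  using extend_add[of "p - q" q] by (simp add: algebra_simps)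

end

locale mpoly_extend_ring_hom = mpoly_extend_additive +
  assumes mult: "f (m + m') (a * b) = f m a * f m' b" and one: "f 0 1 = 1"
begin

lemma extend_one [simp]: "mpoly_extend f 1 = 1"
  using extend_single[of 0 1] by (simp add: one del: extend_single)

lemma extend_mult: "mpoly_extend f (p * q) = mpoly_extend f p * mpoly_extend f q"
proof -
  have "p * q = (\<Sum>m\<in>Poly_Mapping.keys p. \<Sum>m'\<in>Poly_Mapping.keys q.
       Poly_Mapping.single (m + m') (Poly_Mapping.lookup p m * Poly_Mapping.lookup q m'))"
    by (subst mpoly_sum_singles[of p], subst mpoly_sum_singles[of q])
       (simp add: sum_product mult_single)
  then have "mpoly_extend f (p * q) = (\<Sum>m\<in>Poly_Mapping.keys p. \<Sum>m'\<in>Poly_Mapping.keys q.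
       f m (Poly_Mapping.lookup p m) * f m' (Poly_Mapping.lookup q m'))"
    by (simp add: extend_sum mult)
  also have "\<dots> = mpoly_extend f p * mpoly_extend f q"
    by (simp add: mpoly_extend_def sum_product)
  finally show ?thesis .
qed

lemma extend_power: "mpoly_extend f (p ^ k) = mpoly_extend f p ^ k"
  by (induction k) (auto simp: extend_mult)

end

definition eval_mon :: "(nat \<Rightarrow> 'a::comm_ring_1) \<Rightarrow> (nat \<Rightarrow>\<^sub>0 nat) \<Rightarrow> 'a" where
  "eval_mon v m = (\<Prod>j\<in>Poly_Mapping.keys m. v j ^ Poly_Mapping.lookup m j)"

definition mdeg :: "(nat \<Rightarrow>\<^sub>0 nat) \<Rightarrow> nat" where
  "mdeg m = (\<Sum>j\<in>Poly_Mapping.keys m. Poly_Mapping.lookup m j)"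

lemma eval_mon_superset:
  "finite S \<Longrightarrow> Poly_Mapping.keys m \<subseteq> S \<Longrightarrow> eval_mon v m = (\<Prod>j\<in>S. v j ^ Poly_Mapping.lookup m j)"
  unfolding eval_mon_def by (rule prod.mono_neutral_left) (auto simp: in_keys_iff)

lemma mdeg_superset:
  "finite S \<Longrightarrow> Poly_Mapping.keys m \<subseteq> S \<Longrightarrow> mdeg m = (\<Sum>j\<in>S. Poly_Mapping.lookup m j)"
  unfolding mdeg_def by (rule sum.mono_neutral_left) (auto simp: in_keys_iff)

lemma eval_mon_add: "eval_mon v (m + m') = eval_mon v m * eval_mon v m'"
  using keys_add[of m m']
  by (simp add: eval_mon_superset[of "Poly_Mapping.keys m \<union> Poly_Mapping.keys m'"]
      lookup_add power_add prod.distrib)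

lemma mdeg_add: "mdeg (m + m') = mdeg m + mdeg m'"
  using keys_add[of m m']
  by (simp add: mdeg_superset[of "Poly_Mapping.keys m \<union> Poly_Mapping.keys m'"]
      lookup_add sum.distrib)

lemma eval_mon_zero [simp]: "eval_mon v 0 = 1"
  by (simp add: eval_mon_def)

lemma eval_mon_single [simp]: "eval_mon v (Poly_Mapping.single i k) = v i ^ k"
  by (cases "k = 0") (auto simp: eval_mon_def)

lemma mdeg_zero [simp]: "mdeg 0 = 0"
  by (simp add: mdeg_def)

lemma mdeg_single [simp]: "mdeg (Poly_Mapping.single i k) = k"
  by (cases "k = 0") (auto simp: mdeg_def)

lemma minus_single_lookup_add:
  fixes m :: "nat \<Rightarrow>\<^sub>0 nat"
  assumes "k \<le> Poly_Mapping.lookup m i"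
  shows "m - Poly_Mapping.single i k + Poly_Mapping.single i k = m"
proof (rule poly_mapping_eqI)
  fix j
  show "Poly_Mapping.lookup (m - Poly_Mapping.single i k + Poly_Mapping.single i k) j = Poly_Mapping.lookup m j"
    using assms by (cases "j = i") (simp_all add: lookup_add lookup_minus lookup_single)
qed

lemma mdeg_minus_single:
  fixes m :: "nat \<Rightarrow>\<^sub>0 nat"
  assumes "k \<le> Poly_Mapping.lookup m i"
  shows "mdeg (m - Poly_Mapping.single i k) = mdeg m - k"
  using mdeg_add[of "m - Poly_Mapping.single i k" "Poly_Mapping.single i k"]
    minus_single_lookup_add[OF assms] by simp

lemma lookup_le_mdeg: "Poly_Mapping.lookup m i \<le> mdeg m"
  using mdeg_add[of "m - Poly_Mapping.single i (Poly_Mapping.lookup m i)" "Poly_Mapping.single i (Poly_Mapping.lookup m i)"]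
    minus_single_lookup_add[of "Poly_Mapping.lookup m i" m i] by simp

section \<open>Evaluation and grading\<close>

definition eval_mpoly :: "(nat \<Rightarrow> 'a::comm_ring_1) \<Rightarrow> 'a mpoly \<Rightarrow> 'a" where
  "eval_mpoly v = mpoly_extend (\<lambda>m c. c * eval_mon v m)"

interpretation eval: mpoly_extend_ring_hom "\<lambda>m c. c * eval_mon v m"
  by unfold_locales (auto simp: algebra_simps eval_mon_add)

text \<open>The grading \<open>k[x] \<rightarrow> k[x][s]\<close>, \<open>x^m \<mapsto> x^m s^|m|\<close>: it turns total degree into degree in \<open>s\<close>.\<close>

definition graded :: "'a::comm_ring_1 mpoly \<Rightarrow> 'a mpoly poly" where
  "graded = mpoly_extend (\<lambda>m c. monom (Poly_Mapping.single m c) (mdeg m))"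

interpretation graded: mpoly_extend_ring_hom "\<lambda>m c. monom (Poly_Mapping.single m c) (mdeg m)"
  by unfold_locales (auto simp: single_add add_monom mult_monom mult_single mdeg_add)

lemma eval_mpoly_add [simp]: "eval_mpoly v (p + q) = eval_mpoly v p + eval_mpoly v q"
  unfolding eval_mpoly_def by (rule eval.extend_add)

lemma eval_mpoly_diff [simp]: "eval_mpoly v (p - q) = eval_mpoly v p - eval_mpoly v q"
  unfolding eval_mpoly_def by (rule eval.extend_diff)

lemma eval_mpoly_mult [simp]: "eval_mpoly v (p * q) = eval_mpoly v p * eval_mpoly v q"
  unfolding eval_mpoly_def by (rule eval.extend_mult)

lemma eval_mpoly_power [simp]: "eval_mpoly v (p ^ k) = eval_mpoly v p ^ k"
  unfolding eval_mpoly_def by (rule eval.extend_power)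

lemma eval_mpoly_sum [simp]: "eval_mpoly v (sum g S) = (\<Sum>i\<in>S. eval_mpoly v (g i))"
  unfolding eval_mpoly_def by (rule eval.extend_sum)

lemma eval_mpoly_single [simp]: "eval_mpoly v (Poly_Mapping.single m c) = c * eval_mon v m"
  unfolding eval_mpoly_def by (rule eval.extend_single)

lemma eval_mpoly_zero [simp]: "eval_mpoly v 0 = 0"
  unfolding eval_mpoly_def by (rule eval.extend_zero)

lemma eval_mpoly_numeral [simp]: "eval_mpoly v (numeral k) = numeral k"
  by (simp flip: single_numeral)

lemma eval_mpoly_mconst [simp]: "eval_mpoly v (mconst c) = c"
  by (simp add: mconst_def)

lemma eval_mpoly_mvar [simp]: "eval_mpoly v (mvar i) = v i"
  by (simp add: mvar_def)

interpretation eval_pdiff: mpoly_extend_additive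
    "\<lambda>m c. of_nat (Poly_Mapping.lookup m j) * c * eval_mon v (m - Poly_Mapping.single j 1)"
  by unfold_locales (auto simp: algebra_simps)

lemma eval_mpoly_pdiff:
  "eval_mpoly v (pdiff j p) = mpoly_extend
     (\<lambda>m c. of_nat (Poly_Mapping.lookup m j) * c * eval_mon v (m - Poly_Mapping.single j 1)) p"
  by (simp add: pdiff_def mpoly_extend_def)

lemma graded_mult [simp]: "graded (p * q) = graded p * graded q"
  unfolding graded_def by (rule graded.extend_mult)

lemma graded_power [simp]: "graded (p ^ k) = graded p ^ k"
  unfolding graded_def by (rule graded.extend_power)

lemma graded_sum: "graded (sum g S) = (\<Sum>i\<in>S. graded (g i))"
  unfolding graded_def by (rule graded.extend_sum)

lemma lookup_coeff_graded:
  "Poly_Mapping.lookup (coeff (graded p) k) m =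
     (if mdeg m = k then Poly_Mapping.lookup p m else 0)"
proof -
  have "Poly_Mapping.lookup (coeff (graded p) k) m =
     (\<Sum>m'\<in>Poly_Mapping.keys p. if m' = m then (if mdeg m = k then Poly_Mapping.lookup p m else 0) else 0)"
    unfolding graded_def mpoly_extend_def coeff_sum lookup_sum
    by (rule sum.cong) (auto simp: lookup_single when_def)
  then show ?thesis
    by (auto simp: in_keys_iff)
qed

lemma graded_eq_0_iff [simp]: "graded p = 0 \<longleftrightarrow> p = 0"
proof
  assume "graded p = 0"
  then have "Poly_Mapping.lookup p m = 0" for m
    using lookup_coeff_graded[of p "mdeg m" m] by simp
  then show "p = 0"
    by (intro poly_mapping_eqI) simp
qed (simp add: graded_def)

lemma tdeg_eq_Max: "tdeg p = Max (mdeg ` Poly_Mapping.keys p)"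
  by (simp add: tdeg_def wdeg_def mdeg_def)

lemma mdeg_le_tdeg: "m \<in> Poly_Mapping.keys p \<Longrightarrow> mdeg m \<le> tdeg p"
  by (simp add: tdeg_eq_Max)

lemma degree_graded:
  assumes "p \<noteq> 0"
  shows "degree (graded p) = tdeg p"
proof (rule antisym)
  show "degree (graded p) \<le> tdeg p"
  proof (rule degree_le, intro allI impI)
    fix k assume "tdeg p < k"
    have "Poly_Mapping.lookup (coeff (graded p) k) m = 0" for m
    proof (cases "m \<in> Poly_Mapping.keys p")
      case True
      then show ?thesis
        using mdeg_le_tdeg[OF True] \<open>tdeg p < k\<close> by (simp add: lookup_coeff_graded)
    qed (simp add: lookup_coeff_graded in_keys_iff)
    then show "coeff (graded p) k = 0"
      by (intro poly_mapping_eqI) simp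
  qed
next
  have "tdeg p \<in> mdeg ` Poly_Mapping.keys p"
    unfolding tdeg_eq_Max using assms by (intro Max_in) auto
  then obtain m where "m \<in> Poly_Mapping.keys p" "mdeg m = tdeg p"
    by auto
  then have "Poly_Mapping.lookup (coeff (graded p) (tdeg p)) m \<noteq> 0"
    by (simp add: lookup_coeff_graded in_keys_iff)
  then show "tdeg p \<le> degree (graded p)"
    by (intro le_degree) auto
qed

lemma tdeg_single: "c \<noteq> 0 \<Longrightarrow> tdeg (Poly_Mapping.single m c) = mdeg m"
  by (simp add: tdeg_eq_Max)

lemma tdeg_mult:
  fixes p q :: "'a::idom mpoly"
  assumes "p \<noteq> 0" "q \<noteq> 0"
  shows "tdeg (p * q) = tdeg p + tdeg q"
  using assms
  by (simp flip: degree_graded add: degree_mult_eq)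

lemma tdeg_power:
  fixes p :: "'a::idom mpoly"
  assumes "p \<noteq> 0"
  shows "tdeg (p ^ k) = k * tdeg p"
  using assms
  by (simp flip: degree_graded add: degree_power_eq)

lemma tdeg_sum_dominant:
  fixes g :: "'b \<Rightarrow> 'a::comm_ring_1 mpoly"
  assumes "finite K" "M \<in> K" "g M \<noteq> 0"
    and less: "\<And>m. m \<in> K \<Longrightarrow> m \<noteq> M \<Longrightarrow> g m \<noteq> 0 \<Longrightarrow> tdeg (g m) < tdeg (g M)"
  shows "sum g K \<noteq> 0 \<and> tdeg (sum g K) = tdeg (g M)"
proof -
  define D where "D = tdeg (g M)"
  have split: "graded (sum g K) = graded (g M) + (\<Sum>m\<in>K - {M}. graded (g m))"
    unfolding graded_sum using sum.remove[OF assms(1,2)] by simp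
  have rest: "coeff (\<Sum>m\<in>K - {M}. graded (g m)) k = 0" if "D \<le> k" for k
    unfolding coeff_sum
  proof (rule sum.neutral, rule ballI)
    fix m assume m: "m \<in> K - {M}"
    show "coeff (graded (g m)) k = 0"
    proof (cases "g m = 0")
      case False
      then show ?thesis
        using less[of m] m that by (intro coeff_eq_0) (simp add: degree_graded D_def)
    qed (simp add: graded_def)
  qed
  have "coeff (graded (sum g K)) D = lead_coeff (graded (g M))"
    unfolding split coeff_add rest[OF order.refl] by (simp add: degree_graded[OF assms(3)] D_def)
  then have top: "coeff (graded (sum g K)) D \<noteq> 0"
    using assms(3) by simp
  have above: "coeff (graded (sum g K)) k = 0" if "D < k" for k
    unfolding split coeff_add using that rest[of k]
    by (simp add: coeff_eq_0 degree_graded[OF assms(3)] D_def)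
  have "degree (graded (sum g K)) = D"
    using top above by (intro antisym degree_le le_degree) auto
  moreover have "sum g K \<noteq> 0"
    using top by (metis coeff_0 graded_eq_0_iff)
  ultimately show ?thesis
    using degree_graded[of "sum g K"] by (simp add: D_def)
qed

section \<open>Substituting for \<open>t\<close>\<close>

text \<open>The total degree of \<open>\<pi>(t^m\<^sub>0 x^m')\<close> when \<open>\<pi>(t)\<close> has total degree \<open>d\<close>.\<close>

definition subst_mdeg :: "nat \<Rightarrow> (nat \<Rightarrow>\<^sub>0 nat) \<Rightarrow> nat" where
  "subst_mdeg d m = Poly_Mapping.lookup m 0 * d + (mdeg m - Poly_Mapping.lookup m 0)"

lemma tdeg_subst_t:
  fixes p q :: "'a::idom mpoly"
  assumes "q \<noteq> 0" "M \<in> Poly_Mapping.keys p"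
    and less: "\<And>m. m \<in> Poly_Mapping.keys p \<Longrightarrow> m \<noteq> M \<Longrightarrow> subst_mdeg (tdeg q) m < subst_mdeg (tdeg q) M"
  shows "subst_t q p \<noteq> 0 \<and> tdeg (subst_t q p) = subst_mdeg (tdeg q) M"
proof -
  define T where "T m = mconst (Poly_Mapping.lookup p m) * q ^ Poly_Mapping.lookup m 0 *
    Poly_Mapping.single (m - Poly_Mapping.single 0 (Poly_Mapping.lookup m 0)) 1" for m
  have T: "T m \<noteq> 0 \<and> tdeg (T m) = subst_mdeg (tdeg q) m" if "m \<in> Poly_Mapping.keys p" for m
  proof -
    let ?x = "m - Poly_Mapping.single 0 (Poly_Mapping.lookup m 0)"
    have c: "Poly_Mapping.lookup p m \<noteq> 0"
      using that by (simp add: in_keys_iff)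
    have "T m = Poly_Mapping.single ?x (Poly_Mapping.lookup p m) * q ^ Poly_Mapping.lookup m 0"
      by (simp add: T_def mconst_def mult_single mult.commute mult.left_commute)
    moreover have "mdeg ?x = mdeg m - Poly_Mapping.lookup m 0"
      by (simp add: mdeg_minus_single)
    moreover have "Poly_Mapping.single ?x (Poly_Mapping.lookup p m) \<noteq> 0"
      using c by (metis lookup_single_eq lookup_zero)
    moreover have "q ^ Poly_Mapping.lookup m 0 \<noteq> 0"
      using assms(1) by simp
    ultimately show ?thesis
      using c assms(1) by (simp add: tdeg_mult tdeg_power tdeg_single subst_mdeg_def)
  qed
  have "subst_t q p = sum T (Poly_Mapping.keys p)"
    by (simp add: subst_t_def T_def)
  then show ?thesis
    using tdeg_sum_dominant[of "Poly_Mapping.keys p" M T] assms(2) T less by simp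
qed


section \<open>Homogeneity and nonvanishing of \<open>f\<^sub>[\<^sub>n\<^sub>]\<close>\<close>

definition homog :: "nat \<Rightarrow> 'a::comm_ring_1 mpoly \<Rightarrow> bool" where
  "homog k p \<longleftrightarrow> (\<forall>m\<in>Poly_Mapping.keys p. mdeg m = k)"

lemma homog_diff: "homog k p \<Longrightarrow> homog k q \<Longrightarrow> homog k (p - q)"
  using keys_diff[of p q] by (auto simp: homog_def)

lemma homog_mult: "homog k p \<Longrightarrow> homog l q \<Longrightarrow> homog (k + l) (p * q)"
  using keys_mult[of p q] by (auto simp: homog_def mdeg_add)

lemma homog_sum: "(\<And>i. i \<in> S \<Longrightarrow> homog k (g i)) \<Longrightarrow> homog k (sum g S)"
  using keys_sum[of g S] by (auto simp: homog_def)

lemma homog_mconst: "homog 0 (mconst c)"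
  by (simp add: homog_def mconst_def)

lemma homog_numeral_mult: "homog k p \<Longrightarrow> homog k (numeral c * p)"
  using homog_mult[of 0 "numeral c" k p] by (simp add: homog_def flip: single_numeral)

lemma homog_mvar: "homog 1 (mvar i)"
  by (simp add: homog_def mvar_def)

lemma homog_pdiff:
  assumes "homog k p"
  shows "homog (k - 1) (pdiff i p)"
  unfolding homog_def
proof
  fix m' assume "m' \<in> Poly_Mapping.keys (pdiff i p)"
  then obtain m where m: "m \<in> Poly_Mapping.keys p" and m': "m' = m - Poly_Mapping.single i 1"
    and nz: "of_nat (Poly_Mapping.lookup m i) * Poly_Mapping.lookup p m \<noteq> (0::'a)"
    unfolding pdiff_def by (auto dest!: subsetD[OF keys_sum] split: if_splits)
  from nz have "1 \<le> Poly_Mapping.lookup m i"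
    by (cases "Poly_Mapping.lookup m i") auto
  then show "mdeg m' = k - 1"
    using assms m by (simp add: m' mdeg_minus_single homog_def)
qed

lemma homog_Dder:
  assumes "homog k p" "1 \<le> k"
  shows "homog k (Dder n p)"
  unfolding Dder_def
proof (rule homog_sum)
  fix j
  have "homog (0 + 1 + (k - 1)) (mconst (of_nat (n - j)) * mvar (j + 1) * pdiff j p)"
    using assms(1) by (intro homog_mult homog_mconst homog_mvar homog_pdiff)
  then show "homog k (mconst (of_nat (n - j)) * mvar (j + 1) * pdiff j p)"
    using assms(2) by simp
qed

lemma homog_f_odd: "homog 2 (f_odd N)"
proof -
  have "homog (0 + (0 + 1 + 1)) (f_odd N)"
    unfolding f_odd_def by (intro homog_mult homog_mconst homog_sum homog_mvar)
  then show ?thesis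
    by (simp add: numeral_2_eq_2)
qed

lemma tdeg_homog:
  assumes "homog k p" "p \<noteq> 0"
  shows "tdeg p = k"
proof -
  obtain m where "m \<in> Poly_Mapping.keys p"
    using assms(2) by fastforce
  then have "mdeg ` Poly_Mapping.keys p = {k}"
    using assms(1) unfolding homog_def by force
  then show ?thesis
    by (simp add: tdeg_eq_Max)
qed


lemma homog_fpoly: "homog (if odd n then 2 else 4) (fpoly n)"
proof (cases "odd n")
  case False
  let ?g = "f_odd (n - 1)"
  have D1: "homog 2 (Dder n ?g)" and D2: "homog 2 (Dder n (Dder n ?g))"
    by (simp_all add: homog_Dder homog_f_odd)
  have "homog (2 + 2) (Dder n ?g ^ 2)"
    unfolding power2_eq_square by (intro homog_mult D1)
  moreover have "homog (2 + 2) (2 * Dder n (Dder n ?g) * ?g)"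
    by (intro homog_mult homog_numeral_mult D2 homog_f_odd)
  ultimately have "homog 4 (Dder n ?g ^ 2 - 2 * Dder n (Dder n ?g) * ?g)"
    by (intro homog_diff) simp_all
  then show ?thesis
    using False by (simp only: fpoly_def if_False)
qed (simp add: fpoly_def homog_f_odd)

lemma sum_atLeastAtMost_eq_ends:
  fixes h :: "nat \<Rightarrow> 'a::comm_monoid_add"
  assumes "1 < N" "\<And>i. 1 < i \<Longrightarrow> i < N \<Longrightarrow> h i = 0"
  shows "(\<Sum>i=1..N. h i) = h 1 + h N"
proof -
  have "(\<Sum>i=1..N. h i) = (\<Sum>i\<in>{1, N}. h i)"
    using assms by (intro sum.mono_neutral_right) auto
  then show ?thesis
    using assms(1) by simp
qed

lemma f_odd_eq_sum_singles:
  "f_odd N = (\<Sum>i=1..N. Poly_Mapping.single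
      (Poly_Mapping.single i 1 + Poly_Mapping.single (N + 1 - i) 1)
      (1/2 * ((-1) ^ (i - 1) * of_nat ((N - 1) choose (i - 1)))))"
  unfolding f_odd_def sum_distrib_left
  by (rule sum.cong) (simp_all add: mconst_def mvar_def mult_single flip: mult.assoc)

text \<open>At \<open>x\<^sub>1 = x\<^sub>n = 1\<close>, all other \<open>x\<^sub>j = 0\<close>, the polynomial \<open>f\<^sub>[\<^sub>n\<^sub>]\<close> takes the value 1:
for odd \<open>n\<close> only the terms \<open>x\<^sub>1x\<^sub>n\<close> and \<open>x\<^sub>nx\<^sub>1\<close> survive; for even \<open>n\<close> the form \<open>f\<^sub>[\<^sub>n\<^sub>-\<^sub>1\<^sub>]\<close>
vanishes there, while \<open>D f\<^sub>[\<^sub>n\<^sub>-\<^sub>1\<^sub>] = x\<^sub>n \<partial>\<^sub>n\<^sub>-\<^sub>1 f\<^sub>[\<^sub>n\<^sub>-\<^sub>1\<^sub>] = 1\<close>.\<close>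

definition ends_point :: "nat \<Rightarrow> nat \<Rightarrow> 'a::comm_ring_1" where
  "ends_point n j = (if j = 1 \<or> j = n then 1 else 0)"

lemma eval_f_odd_ends_point:
  assumes "odd n" "3 \<le> n"
  shows "eval_mpoly (ends_point n) (f_odd n) = (1 :: 'a::field_char_0)"
proof -
  have "eval_mpoly (ends_point n) (f_odd n :: 'a mpoly) = 1/2 * (\<Sum>i=1..n. (-1) ^ (i - 1) *
      of_nat ((n - 1) choose (i - 1)) * ends_point n i * ends_point n (n + 1 - i))"
    by (simp add: f_odd_def sum_distrib_left mult.assoc)
  also have "(\<Sum>i=1..n. (-1) ^ (i - 1) * of_nat ((n - 1) choose (i - 1)) *
      ends_point n i * ends_point n (n + 1 - i)) = (2 :: 'a)"
    using assms by (subst sum_atLeastAtMost_eq_ends) (auto simp: ends_point_def)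
  finally show ?thesis
    by simp
qed

lemma eval_f_odd_pred_ends_point:
  assumes "even n" "3 \<le> n"
  shows "eval_mpoly (ends_point n) (f_odd (n - 1)) = (0 :: 'a::field_char_0)"
proof -
  have "eval_mpoly (ends_point n) (f_odd (n - 1) :: 'a mpoly) = 1/2 * (\<Sum>i=1..n - 1. (-1) ^ (i - 1) *
      of_nat ((n - 1 - 1) choose (i - 1)) * ends_point n i * ends_point n (n - 1 + 1 - i))"
    by (simp add: f_odd_def sum_distrib_left mult.assoc)
  also have "(\<Sum>i=1..n - 1. (-1) ^ (i - 1) * of_nat ((n - 1 - 1) choose (i - 1)) *
      ends_point n i * ends_point n (n - 1 + 1 - i)) = (0 :: 'a)"
    using assms by (intro sum.neutral) (auto simp: ends_point_def)
  finally show ?thesis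
    by simp
qed

lemma single_add_single_minus:
  "Poly_Mapping.single a 1 + Poly_Mapping.single b 1 - Poly_Mapping.single b 1 = Poly_Mapping.single a (1::nat)"
  by (intro poly_mapping_eqI) (auto simp: lookup_add lookup_minus lookup_single when_def)

lemma eval_pdiff_f_odd_pred_ends_point:
  assumes "even n" "3 \<le> n"
  shows "eval_mpoly (ends_point n) (pdiff (n - 1) (f_odd (n - 1))) = (1 :: 'a::field_char_0)"
proof -
  let ?c = "\<lambda>i. 1/2 * ((-1) ^ (i - 1) * of_nat ((n - 1 - 1) choose (i - 1))) :: 'a"
  let ?a = "\<lambda>i. Poly_Mapping.single i 1 + Poly_Mapping.single (n - 1 + 1 - i) (1::nat)"
  let ?E = "\<lambda>m c. of_nat (Poly_Mapping.lookup m (n - 1)) * c *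
      eval_mon (ends_point n) (m - Poly_Mapping.single (n - 1) 1) :: 'a"
  have "eval_mpoly (ends_point n) (pdiff (n - 1) (f_odd (n - 1) :: 'a mpoly)) = (\<Sum>i=1..n - 1. ?E (?a i) (?c i))"
    by (simp only: eval_mpoly_pdiff f_odd_eq_sum_singles eval_pdiff.extend_sum eval_pdiff.extend_single)
  also have "\<dots> = ?E (?a 1) (?c 1) + ?E (?a (n - 1)) (?c (n - 1))"
    using assms by (intro sum_atLeastAtMost_eq_ends) (auto simp: lookup_add lookup_single when_def)
  also have "?a 1 - Poly_Mapping.single (n - 1) 1 = Poly_Mapping.single 1 1"
    using assms by (simp add: single_add_single_minus)
  moreover have "?a (n - 1) - Poly_Mapping.single (n - 1) 1 = Poly_Mapping.single 1 1"
    using assms by (simp add: single_add_single_minus add.commute)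
  ultimately show ?thesis
    using assms by (simp add: lookup_add lookup_single when_def ends_point_def)
qed

lemma eval_Dder_f_odd_pred_ends_point:
  assumes "even n" "3 \<le> n"
  shows "eval_mpoly (ends_point n) (Dder n (f_odd (n - 1))) = (1 :: 'a::field_char_0)"
proof -
  let ?e = "\<lambda>j. eval_mpoly (ends_point n) (pdiff j (f_odd (n - 1) :: 'a mpoly))"
  have "eval_mpoly (ends_point n) (Dder n (f_odd (n - 1)) :: 'a mpoly) =
      (\<Sum>j=1..n - 1. of_nat (n - j) * ends_point n (j + 1) * ?e j)"
    by (simp add: Dder_def)
  also have "\<dots> = (\<Sum>j=1..n - 1. if j = n - 1 then ?e (n - 1) else 0)"
    using assms by (intro sum.cong) (auto simp: ends_point_def)
  also have "\<dots> = ?e (n - 1)"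
    using assms by simp
  finally show ?thesis
    using eval_pdiff_f_odd_pred_ends_point[OF assms] by simp
qed

lemma eval_fpoly_ends_point:
  assumes "3 \<le> n"
  shows "eval_mpoly (ends_point n) (fpoly n) = (1 :: 'a::field_char_0)"
proof (cases "odd n")
  case True
  then show ?thesis
    using eval_f_odd_ends_point[OF True assms] by (simp add: fpoly_def)
next
  case False
  then have "even n"
    by simp
  then show ?thesis
    unfolding fpoly_def if_not_P[OF False] eval_mpoly_diff eval_mpoly_mult eval_mpoly_power
      eval_f_odd_pred_ends_point[OF \<open>even n\<close> assms] eval_Dder_f_odd_pred_ends_point[OF \<open>even n\<close> assms]
    by simp
qed

lemma fpoly_nonzero: "3 \<le> n \<Longrightarrow> fpoly n \<noteq> (0 :: 'a::field_char_0 mpoly)"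
  using eval_fpoly_ends_point[of n, where 'a='a] by auto

lemma tdeg_fpoly: "3 \<le> n \<Longrightarrow> tdeg (fpoly n :: 'a::field_char_0 mpoly) = (if odd n then 2 else 4)"
  by (rule tdeg_homog[OF homog_fpoly fpoly_nonzero])


section \<open>The monomials of an element of \<open>\<P>\<^sub>\<alpha>\<^sub>,\<^sub>\<beta>\<close>\<close>

lemma lex_less_iff_less: "lex_less m m' \<longleftrightarrow> m < m'"
  unfolding lex_less_def less_poly_mapping.rep_eq less_fun_def by blast

lemma lead_mon_eq_Max:
  assumes "p \<noteq> 0"
  shows "lead_mon p = Max (Poly_Mapping.keys p)"
  unfolding lead_mon_def
proof (rule the_equality)
  have "Max (Poly_Mapping.keys p) \<in> Poly_Mapping.keys p"
    using assms by (intro Max_in) auto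
  then show "Max (Poly_Mapping.keys p) \<in> Poly_Mapping.keys p \<and>
      (\<forall>m'\<in>Poly_Mapping.keys p. m' \<noteq> Max (Poly_Mapping.keys p) \<longrightarrow> lex_less m' (Max (Poly_Mapping.keys p)))"
    by (auto simp: lex_less_iff_less order.strict_iff_order)
next
  fix m assume m: "m \<in> Poly_Mapping.keys p \<and> (\<forall>m'\<in>Poly_Mapping.keys p. m' \<noteq> m \<longrightarrow> lex_less m' m)"
  then have "Max (Poly_Mapping.keys p) \<le> m"
    using assms by (cases "Max (Poly_Mapping.keys p) = m") (auto simp: lex_less_iff_less)
  moreover have "m \<le> Max (Poly_Mapping.keys p)"
    using m by simp
  ultimately show "m = Max (Poly_Mapping.keys p)"
    by simp
qed

lemma lookup_0_le_of_less:
  fixes m m' :: "nat \<Rightarrow>\<^sub>0 nat"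
  assumes "m < m'"
  shows "Poly_Mapping.lookup m 0 \<le> Poly_Mapping.lookup m' 0"
  using assms unfolding less_poly_mapping.rep_eq less_fun_def
  by (metis bot_nat_0.not_eq_extremum less_or_eq_imp_le)

lemma weight_le_wdeg:
  "m \<in> Poly_Mapping.keys p \<Longrightarrow> (\<Sum>j\<in>Poly_Mapping.keys m. Poly_Mapping.lookup m j * w j) \<le> wdeg w p"
  unfolding wdeg_def by (intro Max_ge) auto

lemma w2_weight_eq:
  fixes m :: "nat \<Rightarrow>\<^sub>0 nat"
  assumes "Poly_Mapping.keys m \<subseteq> {0..n}"
  shows "(\<Sum>j\<in>Poly_Mapping.keys m. Poly_Mapping.lookup m j * w2 n j) =
    Poly_Mapping.lookup m 0 * (n - 2) + ((n - 1) * (\<Sum>j=1..n. Poly_Mapping.lookup m j)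
      + (\<Sum>j=1..n. Poly_Mapping.lookup m j * (n - j)))"
proof -
  let ?l = "Poly_Mapping.lookup m"
  have "(\<Sum>j\<in>Poly_Mapping.keys m. ?l j * w2 n j) = (\<Sum>j=0..n. ?l j * w2 n j)"
    using assms by (intro sum.mono_neutral_left) (auto simp: in_keys_iff)
  also have "\<dots> = ?l 0 * (n - 2) + (\<Sum>j=1..n. ?l j * (2 * n - j - 1))"
    by (simp add: sum.atLeast_Suc_atMost w2_def)
  also have "(\<Sum>j=1..n. ?l j * (2 * n - j - 1)) = (\<Sum>j=1..n. (n - 1) * ?l j + ?l j * (n - j))"
    by (rule sum.cong) (auto simp: algebra_simps simp flip: diff_mult_distrib2)
  also have "\<dots> = (n - 1) * (\<Sum>j=1..n. ?l j) + (\<Sum>j=1..n. ?l j * (n - j))"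
    by (simp add: sum.distrib sum_distrib_left)
  finally show ?thesis .
qed

lemma eq_top_monomial_of_w2_bound:
  fixes m :: "nat \<Rightarrow>\<^sub>0 nat"
  assumes n: "3 \<le> n" and keys: "Poly_Mapping.keys m \<subseteq> {0..n}"
    and m0: "Poly_Mapping.lookup m 0 = \<alpha>" and deg: "mdeg m = \<alpha> + \<beta>"
    and w2: "(\<Sum>j\<in>Poly_Mapping.keys m. Poly_Mapping.lookup m j * w2 n j) \<le> (n - 2) * \<alpha> + (n - 1) * \<beta>"
  shows "m = Poly_Mapping.single 0 \<alpha> + Poly_Mapping.single n \<beta>"
proof -
  let ?l = "Poly_Mapping.lookup m"
  have sb: "(\<Sum>j=1..n. ?l j) = \<beta>"
    using keys deg m0 by (simp add: mdeg_superset[of "{0..n}"] sum.atLeast_Suc_atMost)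
  have "(\<Sum>j=1..n. ?l j * (n - j)) = 0"
    using w2 w2_weight_eq[OF keys] sb m0 by (simp add: mult.commute)
  then have z: "?l j = 0" if "1 \<le> j" "j < n" for j
    using that by fastforce
  have "(\<Sum>j=1..n. ?l j) = (\<Sum>j=1..n. if j = n then ?l n else 0)"
    by (rule sum.cong) (auto simp: z)
  then have ln: "?l n = \<beta>"
    using sb n by simp
  show ?thesis
  proof (rule poly_mapping_eqI)
    fix j
    show "?l j = Poly_Mapping.lookup (Poly_Mapping.single 0 \<alpha> + Poly_Mapping.single n \<beta>) j"
    proof (cases "j \<le> n")
      case True
      then show ?thesis
        using m0 ln z n by (cases "j = 0 \<or> j = n") (auto simp: lookup_add lookup_single)
    next
      case False
      then have "j \<notin> Poly_Mapping.keys m"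
        using keys by auto
      then show ?thesis
        using False by (simp add: lookup_add lookup_single in_keys_iff)
    qed
  qed
qed

lemma subst_mdeg_top_monomial:
  "n \<noteq> 0 \<Longrightarrow> subst_mdeg d (Poly_Mapping.single 0 \<alpha> + Poly_Mapping.single n \<beta>) = \<alpha> * d + \<beta>"
  by (simp add: subst_mdeg_def mdeg_add lookup_add lookup_single)

lemma subst_mdeg_less_top_monomial:
  assumes "3 \<le> n" "2 \<le> d" "p \<in> Pset n \<alpha> \<beta>" "m \<in> Poly_Mapping.keys p"
    and ne: "m \<noteq> Poly_Mapping.single 0 \<alpha> + Poly_Mapping.single n \<beta>"
  shows "subst_mdeg d m < \<alpha> * d + \<beta>"
proof -
  let ?M = "Poly_Mapping.single 0 \<alpha> + Poly_Mapping.single n \<beta>"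
  let ?m0 = "Poly_Mapping.lookup m 0"
  have p: "p \<noteq> 0" "lead_mon p = ?M" "tdeg p \<le> \<alpha> + \<beta>"
    using assms(3) by (simp_all add: Pset_def)
  then have "m < ?M"
    using assms(4) ne by (metis Max_ge finite_keys lead_mon_eq_Max order.strict_iff_order)
  then have "?m0 \<le> \<alpha>"
    using lookup_0_le_of_less assms(1) by (fastforce simp: lookup_add lookup_single)
  have deg: "mdeg m \<le> \<alpha> + \<beta>" "?m0 \<le> mdeg m"
    using mdeg_le_tdeg[OF assms(4)] p(3) lookup_le_mdeg by auto
  show ?thesis
  proof (cases "?m0 < \<alpha>")
    case True
    then have "?m0 * (d - 1) < \<alpha> * (d - 1)"
      using assms(2) by simp
    moreover have "?m0 * d = ?m0 * (d - 1) + ?m0" "\<alpha> * d = \<alpha> * (d - 1) + \<alpha>"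
      using assms(2) by (simp_all add: algebra_simps)
    ultimately show ?thesis
      using deg unfolding subst_mdeg_def by linarith
  next
    case False
    with \<open>?m0 \<le> \<alpha>\<close> have m0: "?m0 = \<alpha>"
      by simp
    have "mdeg m \<noteq> \<alpha> + \<beta>"
    proof
      assume "mdeg m = \<alpha> + \<beta>"
      moreover have "Poly_Mapping.keys m \<subseteq> {0..n}"
        using assms(3,4) by (auto simp: Pset_def vars_in_def)
      moreover have "(\<Sum>j\<in>Poly_Mapping.keys m. Poly_Mapping.lookup m j * w2 n j) \<le> (n - 2) * \<alpha> + (n - 1) * \<beta>"
        using weight_le_wdeg[OF assms(4), of "w2 n"] assms(3) by (simp add: Pset_def)
      ultimately show False
        using eq_top_monomial_of_w2_bound[OF assms(1) _ m0] ne by blast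
    qed
    then show ?thesis
      using deg m0 by (simp add: subst_mdeg_def)
  qed
qed

theorem lemma5p4:
  fixes p :: "'a::field_char_0 mpoly" and n \<alpha> \<beta> :: nat
  assumes "n \<ge> 3" and "\<alpha> \<ge> 1" and "\<beta> \<ge> 1"
    and "p \<in> Pset n \<alpha> \<beta>"
  shows "subst_t (fpoly n) p \<noteq> 0
       \<and> tdeg (subst_t (fpoly n) p) = tdeg (fpoly n :: 'a mpoly) * \<alpha> + \<beta>
       \<and> tdeg (subst_t (fpoly n) p) \<ge> 3"
proof -
  let ?M = "Poly_Mapping.single 0 \<alpha> + Poly_Mapping.single n \<beta>"
  let ?d = "tdeg (fpoly n :: 'a mpoly)"
  have "p \<noteq> 0" "lead_mon p = ?M"
    using assms(4) by (simp_all add: Pset_def)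
  then have M: "?M \<in> Poly_Mapping.keys p"
    by (metis Max_in finite_keys keys_eq_empty lead_mon_eq_Max)
  have d: "2 \<le> ?d"
    using tdeg_fpoly[OF assms(1), where 'a = 'a] by simp
  have top: "subst_mdeg ?d ?M = \<alpha> * ?d + \<beta>"
    using assms(1) by (simp add: subst_mdeg_top_monomial)
  have "subst_t (fpoly n) p \<noteq> 0 \<and> tdeg (subst_t (fpoly n) p) = subst_mdeg ?d ?M"
    using subst_mdeg_less_top_monomial[OF assms(1) d assms(4)]
    by (intro tdeg_subst_t[OF fpoly_nonzero[OF assms(1)] M]) (simp add: top)
  moreover have "2 * 1 \<le> ?d * \<alpha>"
    using d assms(2) by (intro mult_mono) simp_all
  ultimately show ?thesis
    using assms(3) top by (simp add: mult.commute)
qed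

end
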